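(* Let $u$ be the entropy solution of $\partial_t u+\nabla\cdot\mathbf{f}(u)=\sum_{i,j}\partial^2_{x_ix_j}\mathbf{A}_{ij}(u)$ on $(0,\infty)\times\mathcal{G}_d$ with $u(0,\cdot)=u_0\in L^\infty(\mathcal{G}_d)$. Then for all $0\le t_1\le t_2$, $$\int_{\mathcal{G}_d}|u(t_2,\omega)|^2\,d\mathfrak{m}(\omega)\le\int_{\mathcal{G}_d}|u(t_1,\omega)|^2\,d\mathfrak{m}(\omega).$$
   Context: Standing setting: $\mathbf{f}:\mathbb{R}\to\mathbb{R}^d$ smooth; $\mathbf{A}(u)=(\mathbf{A}_{ij}(u))$ smooth symmetric with derivative $A(u)=(a_{ij}(u))$ nonnegative definite; smooth $\sigma_{ik}$ with $a_{ij}=\sum_k\sigma_{ik}\sigma_{jk}$; $\beta_{ik}(u)=\int^u\sigma_{ik}$. $\mathcal{G}_d$ is the Bohr compactification of $\mathbb{R}^d$ (compact abelian group containing $\mathbb{R}^d$ densely; $C(\mathcal{G}_d)\cong\mathrm{AP}(\mathbb{R}^d)$), with normalized Haar measure $\mathfrak{m}$. Partial derivatives on $\mathcal{G}_d$: $\partial_{x_i}f(\omega)=\lim_{h\to0}(f(\omega+he_i)-f(\omega))/h$, $e_i\in\mathbb{R}^d\subset\mathcal{G}_d$; distributions on $(0,\infty)\times\mathcal{G}_d$ are defined via integration by parts against compactly supported test functions with all such iterated derivatives continuous. The entropy solution (exists and is unique; it is continuous in $t$ with values in $L^1(\mathcal{G}_d)$) is the $u\in L^\infty((0,\infty)\times\mathcal{G}_d)$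 with: (i) $\sum_i\partial_{x_i}\beta_{ik}(u)\in L^2((0,\infty)\times\mathcal{G}_d)$; (ii) for $\psi\in C(\mathbb{R})$, $\sum_i\partial_{x_i}\beta^\psi_{ik}(u)=\psi(u)\sum_i\partial_{x_i}\beta_{ik}(u)$, $(\beta^\psi_{ik})'=\psi\beta'_{ik}$; (iii) for every convex $C^2$ $\eta$, with $\mathbf{q}'=\eta'\mathbf{f}'$, $r'_{ij}=\eta'a_{ij}$: $\partial_t\eta(u)+\nabla_x\cdot\mathbf{q}(u)-\sum\partial^2_{x_ix_j}r_{ij}(u)\le-\eta''(u)\sum_k(\sum_i\partial_{x_i}\beta_{ik}(u))^2$ in distributions; (iv) $\int_{\mathcal{G}_d}|u(t)-u_0|d\mathfrak{m}\to0$ as $t\to0^+$. *)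

theory Defs
  imports "HOL-Analysis.Analysis" "HOL-Probability.Probability"
begin

text \<open>Concrete model: the Bohr compactification of R^'n is the Pontryagin dual of the
  discrete group R^'n, i.e. the group of all (not necessarily continuous) characters
  chi : R^'n -> S^1, with pointwise multiplication as group law and the topology of
  pointwise convergence.\<close>

typedef ('n::finite) bohr =
  "{c. (\<forall>a b. (c :: real^'n \<Rightarrow> complex) (a + b) = c a * c b) \<and> (\<forall>a. cmod (c a) = 1)}"
  morphisms chr Abs_bohr
  by (rule exI[of _ "\<lambda>_. 1"]) simp

text \<open>Group law (written additively in the paper).\<close>
definition bohr_add :: "('n::finite) bohr \<Rightarrow> 'n bohr \<Rightarrow> 'n bohr" where
  "bohr_add \<omega> \<omega>' = Abs_bohr (\<lambda>\<xi>. chr \<omega> \<xi> * chr \<omega>' \<xi>)"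

definition bohr_emb :: "real^('n::finite) \<Rightarrow> 'n bohr" where
  "bohr_emb x = Abs_bohr (\<lambda>\<xi>. cis (\<xi> \<bullet> x))"

text \<open>Topology of the Bohr compactification (pointwise convergence of characters).\<close>
definition bohr_top :: "('n::finite) bohr topology" where
  "bohr_top = pullback_topology UNIV chr euclidean"

text \<open>Baire sigma-algebra: generated by the continuous functions, equivalently by the
  evaluation maps omega |-> chr omega xi.\<close>
definition bohr_sets :: "('n::finite) bohr set set" where
  "bohr_sets = sigma_sets UNIV {(\<lambda>\<omega>. chr \<omega> \<xi>) -` B | \<xi> B. B \<in> sets (borel :: complex measure)}"

definition bohr_haar :: "('n::finite) bohr measure \<Rightarrow> bool" where
  "bohr_haar M \<longleftrightarrow> space M = UNIV \<and> sets M = bohr_sets \<and> prob_space M \<and>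
     (\<forall>z A. A \<in> sets M \<longrightarrow> emeasure M ((\<lambda>\<omega>. bohr_add \<omega> z) -` A) = emeasure M A)"

text \<open>A direction of differentiation: None = time, Some i = x_i.\<close>
definition dir_fun :: "('n::finite) option \<Rightarrow> (real \<Rightarrow> 'n bohr \<Rightarrow> real) \<Rightarrow> real \<Rightarrow> 'n bohr \<Rightarrow> (real \<Rightarrow> real)" where
  "dir_fun d \<phi> t \<omega> = (case d of
      None \<Rightarrow> (\<lambda>s. \<phi> (t + s) \<omega>)
    | Some i \<Rightarrow> (\<lambda>h. \<phi> t (bohr_add \<omega> (bohr_emb (h *\<^sub>R axis i 1)))))"

definition pderiv_dir :: "('n::finite) option \<Rightarrow> (real \<Rightarrow> 'n bohr \<Rightarrow> real) \<Rightarrow> real \<Rightarrow> 'n bohr \<Rightarrow> real" where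
  "pderiv_dir d \<phi> t \<omega> = deriv (dir_fun d \<phi> t \<omega>) 0"

fun iter_pderiv :: "('n::finite) option list \<Rightarrow> (real \<Rightarrow> 'n bohr \<Rightarrow> real) \<Rightarrow> real \<Rightarrow> 'n bohr \<Rightarrow> real" where
  "iter_pderiv [] \<phi> = \<phi>"
| "iter_pderiv (d # ds) \<phi> = pderiv_dir d (iter_pderiv ds \<phi>)"

text \<open>Test functions: compactly supported in (0,oo) x G_d (G_d is compact, so this means
  support in [a,b] x G_d with 0 < a), all iterated partial derivatives (in t and the x_i)
  exist everywhere and are continuous.\<close>
definition test_fun :: "(real \<Rightarrow> ('n::finite) bohr \<Rightarrow> real) \<Rightarrow> bool" where
  "test_fun \<phi> \<longleftrightarrow>
     (\<exists>a b. 0 < a \<and> (\<forall>t \<omega>. \<phi> t \<omega> \<noteq> 0 \<longrightarrow> a \<le> t \<and> t \<le> b)) \<and>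
     (\<forall>ds. continuous_map (prod_topology euclideanreal bohr_top) euclideanreal
              (\<lambda>(t, \<omega>). iter_pderiv ds \<phi> t \<omega>) \<and>
           (\<forall>d t \<omega>. dir_fun d (iter_pderiv ds \<phi>) t \<omega> differentiable (at 0)))"

definition ST :: "('n::finite) bohr measure \<Rightarrow> (real \<times> 'n bohr) measure" where
  "ST M = restrict_space lborel {0<..} \<Otimes>\<^sub>M M"

definition smooth_real :: "(real \<Rightarrow> real) \<Rightarrow> bool" where
  "smooth_real g \<longleftrightarrow> (\<forall>n x. ((deriv ^^ n) g) differentiable (at x))"

definition entropy_solution ::
  "('n::finite) bohr measure \<Rightarrow> ('n \<Rightarrow> real \<Rightarrow> real) \<Rightarrow> ('n \<Rightarrow> 'n \<Rightarrow> real \<Rightarrow> real) \<Rightarrow>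
   ('n \<Rightarrow> 'k::finite \<Rightarrow> real \<Rightarrow> real) \<Rightarrow> ('n bohr \<Rightarrow> real) \<Rightarrow> (real \<Rightarrow> 'n bohr \<Rightarrow> real) \<Rightarrow> bool"
  where
  "entropy_solution M f A \<sigma> u0 u \<longleftrightarrow>
     \<comment> \<open>u in L-infinity((0,oo) x G_d)\<close>
     (\<lambda>(t, \<omega>). u t \<omega>) \<in> borel_measurable (ST M) \<and>
     (\<exists>C. AE p in ST M. \<bar>u (fst p) (snd p)\<bar> \<le> C) \<and>
     (\<exists>g :: 'k \<Rightarrow> real \<Rightarrow> 'n bohr \<Rightarrow> real.
       \<comment> \<open>(i): sum_i d_{x_i} beta_ik(u) = g_k in L^2\<close>
       (\<forall>k. (\<lambda>(t, \<omega>). g k t \<omega>) \<in> borel_measurable (ST M) \<and>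
            integrable (ST M) (\<lambda>(t, \<omega>). (g k t \<omega>)\<^sup>2)) \<and>
       \<comment> \<open>(ii) chain rule, for every continuous psi and every primitive beta^psi_ik of psi sigma_ik
           (psi = 1 gives the defining identity of g_k in (i))\<close>
       (\<forall>(\<psi> :: real \<Rightarrow> real) (B :: 'n \<Rightarrow> 'k \<Rightarrow> real \<Rightarrow> real) k \<phi>.
          continuous_on UNIV \<psi> \<longrightarrow>
          (\<forall>i v. (B i k has_real_derivative \<psi> v * \<sigma> i k v) (at v)) \<longrightarrow>
          test_fun \<phi> \<longrightarrow>
          (\<integral>p. (\<Sum>i\<in>UNIV. B i k (u (fst p) (snd p)) *
                  iter_pderiv [Some i] \<phi> (fst p) (snd p)) \<partial>ST M)
          = - (\<integral>p. \<psi> (u (fst p) (snd p)) * g k (fst p) (snd p) * \<phi> (fst p) (snd p) \<partial>ST M)) \<and>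
       \<comment> \<open>(iii) entropy inequalities\<close>
       (\<forall>(\<eta> :: real \<Rightarrow> real) \<eta>1 \<eta>2 (q :: 'n \<Rightarrow> real \<Rightarrow> real) (r :: 'n \<Rightarrow> 'n \<Rightarrow> real \<Rightarrow> real) \<phi>.
          convex_on UNIV \<eta> \<longrightarrow>
          (\<forall>v. (\<eta> has_real_derivative \<eta>1 v) (at v)) \<longrightarrow>
          (\<forall>v. (\<eta>1 has_real_derivative \<eta>2 v) (at v)) \<longrightarrow>
          continuous_on UNIV \<eta>2 \<longrightarrow>
          (\<forall>i v. (q i has_real_derivative \<eta>1 v * deriv (f i) v) (at v)) \<longrightarrow>
          (\<forall>i j v. (r i j has_real_derivative \<eta>1 v * deriv (A i j) v) (at v)) \<longrightarrow>
          test_fun \<phi> \<longrightarrow> (\<forall>t \<omega>. 0 \<le> \<phi> t \<omega>) \<longrightarrow>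
          0 \<le> (\<integral>p. (let t = fst p; \<omega> = snd p; w = u t \<omega> in
                   \<eta> w * iter_pderiv [None] \<phi> t \<omega>
                 + (\<Sum>i\<in>UNIV. q i w * iter_pderiv [Some i] \<phi> t \<omega>)
                 + (\<Sum>i\<in>UNIV. \<Sum>j\<in>UNIV. r i j w * iter_pderiv [Some i, Some j] \<phi> t \<omega>)
                 - \<eta>2 w * (\<Sum>k\<in>UNIV. (g k t \<omega>)\<^sup>2) * \<phi> t \<omega>) \<partial>ST M))) \<and>
     \<comment> \<open>(iv) initial condition\<close>
     ((\<lambda>t. \<integral>\<omega>. \<bar>u t \<omega> - u0 \<omega>\<bar> \<partial>M) \<longlongrightarrow> 0) (at_right 0)"

end

theory Submission
  imports Defs "HOL-Computational_Algebra.Polynomial"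
begin

text \<open>
  Test the entropy inequality with the convex entropy \<open>\<eta>(v) = v\<^sup>2\<close> and a nonnegative test
  function \<open>\<theta>(t)\<close> that does not depend on the space variable: the flux and diffusion terms only
  see spatial derivatives of \<open>\<theta>\<close> and vanish, and the dissipation term has a sign.  Hence the
  energy \<open>E(t) = \<integral> u(t)\<^sup>2 dm\<close> satisfies \<open>\<integral> E \<theta>' dt \<ge> 0\<close>, i.e. it is weakly nonincreasing
  on \<open>(0, \<infinity>)\<close>.  The energy is continuous, because \<open>u\<close> is continuous in \<open>L\<^sup>1\<close> and bounded
  (the space-time \<open>L\<^sup>\<infinity>\<close> bound passes to every time slice by \<open>L\<^sup>1\<close>-continuity).  Letting \<open>\<theta>\<close>
  approach the indicator of \<open>[a, b]\<close>, so that \<open>\<theta>'\<close> becomes a mollifier at \<open>a\<close> minus a mollifier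
  at \<open>b\<close>, gives \<open>E(b) \<le> E(a)\<close>, and continuity at \<open>0\<close> extends this to \<open>a = 0\<close>.
\<close>

definition n_times_differentiable :: "nat \<Rightarrow> (real \<Rightarrow> real) \<Rightarrow> bool" where
  "n_times_differentiable n f \<longleftrightarrow> (\<forall>m<n. \<forall>x. (deriv ^^ m) f differentiable (at x))"

lemma smooth_real_iff_n_times_differentiable:
  "smooth_real f \<longleftrightarrow> (\<forall>n. n_times_differentiable n f)"
  unfolding smooth_real_def n_times_differentiable_def by blast

lemma n_times_differentiable_0 [simp]: "n_times_differentiable 0 f"
  by (simp add: n_times_differentiable_def)

lemma n_times_differentiable_Suc:
  "n_times_differentiable (Suc n) f \<longleftrightarrow>
     (\<forall>x. f differentiable (at x)) \<and> n_times_differentiable n (deriv f)"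
  unfolding n_times_differentiable_def
  by (auto simp: less_Suc_eq_0_disj funpow_Suc_right simp del: funpow.simps)

lemma n_times_differentiable_SucD:
  "n_times_differentiable (Suc n) f \<Longrightarrow> n_times_differentiable n f"
  by (simp add: n_times_differentiable_def)

lemma real_differentiable_iff_field_differentiable:
  "(f :: real \<Rightarrow> real) differentiable (at x) \<longleftrightarrow> f field_differentiable (at x)"
  by (simp add: real_differentiable_def field_differentiable_def)

lemma n_times_differentiable_const: "n_times_differentiable n (\<lambda>x. c)"
  by (induction n arbitrary: c) (simp_all add: n_times_differentiable_Suc)

lemma n_times_differentiable_add:
  "n_times_differentiable n f \<Longrightarrow> n_times_differentiable n g \<Longrightarrow>
     n_times_differentiable n (\<lambda>x. f x + g x)"
proof (induction n arbitrary: f g)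
  case (Suc n)
  then have "deriv (\<lambda>x. f x + g x) = (\<lambda>x. deriv f x + deriv g x)"
    by (auto simp: n_times_differentiable_Suc real_differentiable_iff_field_differentiable)
  with Suc show ?case
    by (auto simp: n_times_differentiable_Suc)
qed simp

lemma n_times_differentiable_mult:
  "n_times_differentiable n f \<Longrightarrow> n_times_differentiable n g \<Longrightarrow>
     n_times_differentiable n (\<lambda>x. f x * g x)"
proof (induction n arbitrary: f g)
  case (Suc n)
  then have "deriv (\<lambda>x. f x * g x) = (\<lambda>x. f x * deriv g x + deriv f x * g x)"
    by (auto simp: n_times_differentiable_Suc real_differentiable_iff_field_differentiable)
  moreover have "n_times_differentiable n f" "n_times_differentiable n g"
    using Suc.prems by (auto dest: n_times_differentiable_SucD)
  ultimately show ?case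
    using Suc by (auto simp: n_times_differentiable_Suc intro!: n_times_differentiable_add)
qed simp

lemma n_times_differentiable_compose_affine:
  "n_times_differentiable n f \<Longrightarrow> n_times_differentiable n (\<lambda>x. f (c * x + a))"
proof (induction n arbitrary: f)
  case (Suc n)
  then have "deriv (\<lambda>x. f (c * x + a)) = (\<lambda>x. c * deriv f (c * x + a))"
    by (auto simp: n_times_differentiable_Suc real_differentiable_iff_field_differentiable
        intro!: deriv_compose_linear')
  moreover have "(\<lambda>x. f (c * x + a)) differentiable (at x)" for x
  proof -
    obtain D where "(f has_real_derivative D) (at (c * x + a))"
      using Suc.prems by (auto simp: n_times_differentiable_Suc real_differentiable_def)
    then have "((\<lambda>x. f (c * x + a)) has_real_derivative D * c) (at x)"
      by (rule DERIV_chain2) (auto intro!: derivative_eq_intros)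
    then show ?thesis by (auto simp: real_differentiable_def)
  qed
  ultimately show ?case
    using Suc by (auto simp: n_times_differentiable_Suc n_times_differentiable_const
        intro!: n_times_differentiable_mult)
qed simp

lemma smooth_real_const: "smooth_real (\<lambda>x. c)"
  by (simp add: smooth_real_iff_n_times_differentiable n_times_differentiable_const)

lemma smooth_real_add: "smooth_real f \<Longrightarrow> smooth_real g \<Longrightarrow> smooth_real (\<lambda>x. f x + g x)"
  by (simp add: smooth_real_iff_n_times_differentiable n_times_differentiable_add)

lemma smooth_real_mult: "smooth_real f \<Longrightarrow> smooth_real g \<Longrightarrow> smooth_real (\<lambda>x. f x * g x)"
  by (simp add: smooth_real_iff_n_times_differentiable n_times_differentiable_mult)

lemma smooth_real_diff:
  assumes "smooth_real f" "smooth_real g"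
  shows "smooth_real (\<lambda>x. f x - g x)"
proof -
  have "smooth_real (\<lambda>x. f x + (- 1) * g x)"
    by (intro smooth_real_add smooth_real_mult smooth_real_const assms)
  then show ?thesis by simp
qed

lemma smooth_real_compose_affine: "smooth_real f \<Longrightarrow> smooth_real (\<lambda>x. f (c * x + a))"
  by (simp add: smooth_real_iff_n_times_differentiable n_times_differentiable_compose_affine)

lemma smooth_real_deriv: "smooth_real f \<Longrightarrow> smooth_real (deriv f)"
  by (metis smooth_real_iff_n_times_differentiable n_times_differentiable_Suc)

lemma smooth_real_has_real_derivative: "smooth_real f \<Longrightarrow> (f has_real_derivative deriv f x) (at x)"
  by (metis DERIV_deriv_iff_real_differentiable smooth_real_def funpow_0)

lemma smooth_real_continuous_on: "smooth_real f \<Longrightarrow> continuous_on S f"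
  by (meson DERIV_isCont continuous_at_imp_continuous_on smooth_real_has_real_derivative)

lemma smooth_realI_derivatives:
  assumes "D 0 = f" and "\<And>n x. (D n has_real_derivative D (Suc n) x) (at x)"
  shows "smooth_real f"
proof -
  have "(deriv ^^ n) f = D n" for n
    by (induction n) (use assms in \<open>auto intro!: DERIV_imp_deriv\<close>)
  then show ?thesis
    using assms(2) unfolding smooth_real_def real_differentiable_def by metis
qed

lemma smooth_real_antiderivative:
  assumes "\<And>x. (F has_real_derivative f x) (at x)" and "smooth_real f"
  shows "smooth_real F"
proof -
  have "deriv F = f"
    using assms(1) by (auto intro!: DERIV_imp_deriv)
  with assms show ?thesis
    unfolding smooth_real_iff_n_times_differentiable
    by (metis n_times_differentiable_Suc n_times_differentiable_SucD real_differentiable_def)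
qed

section \<open>A smooth step function\<close>

text \<open>All derivatives of \<open>exp (- 1 / x)\<close> have the form \<open>P (1 / x) * exp (- 1 / x)\<close>; this family
  is closed under differentiation, which gives smoothness at \<open>0\<close>.\<close>

definition flat_exp_poly :: "real poly \<Rightarrow> real \<Rightarrow> real" where
  "flat_exp_poly p x = (if 0 < x then poly p (inverse x) * exp (- inverse x) else 0)"

lemma poly_times_exp_minus_tendsto_0: "((\<lambda>z. poly p z * exp (- z)) \<longlongrightarrow> (0 :: real)) at_top"
proof -
  have "((\<lambda>z. \<Sum>i\<le>degree p. coeff p i * (z ^ i / exp z)) \<longlongrightarrow> (0 :: real)) at_top"
    by (intro tendsto_null_sum tendsto_mult_right_zero tendsto_power_div_exp_0)
  then show ?thesis
    by (simp add: poly_altdef sum_divide_distrib exp_minus field_simps)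
qed

lemma flat_exp_poly_has_real_derivative:
  "(flat_exp_poly p has_real_derivative flat_exp_poly ([:0, 0, 1:] * (p - pderiv p)) x) (at x)"
proof (cases x "0 :: real" rule: linorder_cases)
  case less
  have "((\<lambda>_. 0) has_real_derivative 0) (at x)" by simp
  then have "(flat_exp_poly p has_real_derivative 0) (at x)"
    by (rule has_field_derivative_transform_within_open[of _ _ _ "{..<0}"])
       (use less in \<open>auto simp: flat_exp_poly_def\<close>)
  with less show ?thesis
    by (simp add: flat_exp_poly_def)
next
  case greater
  have "((\<lambda>y. poly p (inverse y) * exp (- inverse y)) has_real_derivative
      poly (pderiv p) (inverse x) * (- (inverse x ^ 2)) * exp (- inverse x)
      + poly p (inverse x) * (exp (- inverse x) * (inverse x ^ 2))) (at x)"
    using greater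
    by (auto intro!: derivative_eq_intros DERIV_chain2[OF poly_DERIV] simp: power2_eq_square)
  also have "poly (pderiv p) (inverse x) * (- (inverse x ^ 2)) * exp (- inverse x)
      + poly p (inverse x) * (exp (- inverse x) * (inverse x ^ 2))
      = flat_exp_poly ([:0, 0, 1:] * (p - pderiv p)) x"
    using greater by (simp add: flat_exp_poly_def algebra_simps power2_eq_square)
  finally show ?thesis
    by (rule has_field_derivative_transform_within_open[of _ _ _ "{0<..}"])
       (use greater in \<open>auto simp: flat_exp_poly_def\<close>)
next
  case equal
  have "((\<lambda>z. poly (pCons 0 p) z * exp (- z)) \<longlongrightarrow> 0) at_top"
    by (rule poly_times_exp_minus_tendsto_0)
  then have "(((\<lambda>h. flat_exp_poly p h / h) \<circ> inverse) \<longlongrightarrow> 0) at_top"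
    by (rule Lim_transform_eventually)
       (use eventually_gt_at_top[of 0] in \<open>eventually_elim, simp add: flat_exp_poly_def field_simps\<close>)
  then have "((\<lambda>h. flat_exp_poly p h / h) \<longlongrightarrow> 0) (at_right 0)"
    by (simp add: at_right_to_top filterlim_filtermap o_def)
  moreover have "((\<lambda>h. flat_exp_poly p h / h) \<longlongrightarrow> 0) (at_left 0)"
    by (rule Lim_transform_eventually[OF tendsto_const])
       (auto simp: eventually_at_left_field flat_exp_poly_def intro!: exI[of _ "-1"])
  ultimately show ?thesis
    using equal by (simp add: DERIV_def flat_exp_poly_def filterlim_at_split)
qed

lemma smooth_real_flat_exp_poly: "smooth_real (flat_exp_poly p)"
proof (rule smooth_realI_derivatives)
  show "(flat_exp_poly (((\<lambda>p. [:0, 0, 1:] * (p - pderiv p)) ^^ n) p) has_real_derivative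
      flat_exp_poly (((\<lambda>p. [:0, 0, 1:] * (p - pderiv p)) ^^ Suc n) p) x) (at x)" for n x
    unfolding funpow.simps o_apply by (rule flat_exp_poly_has_real_derivative)
qed simp

definition bump :: "real \<Rightarrow> real" where
  "bump x = (if 0 < x \<and> x < 1 then exp (- inverse x - inverse (1 - x)) else 0)"

lemma bump_eq_flat_exp_poly: "bump x = flat_exp_poly 1 x * flat_exp_poly 1 ((- 1) * x + 1)"
  by (simp add: bump_def flat_exp_poly_def flip: exp_add)

lemma smooth_real_bump: "smooth_real bump"
  unfolding bump_eq_flat_exp_poly[abs_def]
  by (intro smooth_real_mult smooth_real_compose_affine smooth_real_flat_exp_poly)

lemma bump_nonneg: "0 \<le> bump x"
  by (simp add: bump_def)

lemma bump_pos: "0 < x \<Longrightarrow> x < 1 \<Longrightarrow> 0 < bump x"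
  by (simp add: bump_def)

lemma bump_eq_0: "x \<le> 0 \<or> 1 \<le> x \<Longrightarrow> bump x = 0"
  by (auto simp: bump_def)

lemma has_real_derivative_interval_integral:
  fixes f :: "real \<Rightarrow> real" and c :: real
  assumes "continuous_on UNIV f"
  shows "((\<lambda>x. LBINT y=c..x. f y) has_real_derivative f x) (at x)"
proof -
  have "((\<lambda>u. LBINT y=c..u. f y) has_vector_derivative f x) (at x within {min c x - 1..max c x + 1})"
    by (rule interval_integral_FTC2) (auto intro: continuous_on_subset[OF assms])
  then show ?thesis
    by (simp add: has_real_derivative_iff_has_vector_derivative at_within_Icc_at)
qed

lemma integral_has_real_derivative_eq:
  fixes f F :: "real \<Rightarrow> real"
  assumes "a \<le> b" and "\<And>x. (F has_real_derivative f x) (at x)"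
  shows "integral {a..b} f = F b - F a"
  by (meson assms fundamental_theorem_of_calculus has_real_derivative_iff_has_vector_derivative
      has_vector_derivative_at_within integral_unique)

definition bump_primitive :: "real \<Rightarrow> real" where
  "bump_primitive x = (LBINT y=0..x. bump y)"

lemma bump_primitive_has_real_derivative: "(bump_primitive has_real_derivative bump x) (at x)"
  using has_real_derivative_interval_integral[OF smooth_real_continuous_on[OF smooth_real_bump], of 0]
  by (simp add: bump_primitive_def[abs_def] zero_ereal_def)

lemma bump_primitive_0 [simp]: "bump_primitive 0 = 0"
  by (simp add: bump_primitive_def zero_ereal_def)

lemma bump_primitive_eq:
  assumes "x \<le> y" and bump_0: "\<And>z. x < z \<Longrightarrow> z < y \<Longrightarrow> bump z = 0"
  shows "bump_primitive y = bump_primitive x"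
proof (cases "x = y")
  case False
  show ?thesis
  proof (rule DERIV_isconst2[of x y _ y])
    show "continuous_on {x..y} bump_primitive"
      by (meson bump_primitive_has_real_derivative DERIV_isCont continuous_at_imp_continuous_on)
    show "(bump_primitive has_real_derivative 0) (at z)" if "x < z" "z < y" for z
      using bump_primitive_has_real_derivative[of z] bump_0 that by simp
  qed (use assms False in auto)
qed simp

lemma bump_primitive_1_pos: "0 < bump_primitive 1"
proof -
  obtain z where "0 < z" "z < 1" "bump_primitive 1 - bump_primitive 0 = (1 - 0) * bump z"
    using MVT2[of 0 1 bump_primitive bump] bump_primitive_has_real_derivative by auto
  then show ?thesis
    using bump_pos by simp
qed

definition smooth_step :: "real \<Rightarrow> real" where
  "smooth_step x = bump_primitive x / bump_primitive 1"

lemma smooth_step_has_real_derivative: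
  "(smooth_step has_real_derivative bump x / bump_primitive 1) (at x)"
  unfolding smooth_step_def[abs_def]
  by (rule DERIV_cdivide[OF bump_primitive_has_real_derivative])

lemma smooth_real_smooth_step: "smooth_real smooth_step"
proof (rule smooth_real_antiderivative[OF smooth_step_has_real_derivative])
  show "smooth_real (\<lambda>x. bump x / bump_primitive 1)"
    using smooth_real_mult[OF smooth_real_bump smooth_real_const[of "inverse (bump_primitive 1)"]]
    by (simp add: divide_inverse)
qed

lemma smooth_step_mono: "x \<le> y \<Longrightarrow> smooth_step x \<le> smooth_step y"
  by (rule deriv_nonneg_imp_mono[OF smooth_step_has_real_derivative])
     (use bump_nonneg bump_primitive_1_pos in auto)

lemma smooth_step_eq_0: "x \<le> 0 \<Longrightarrow> smooth_step x = 0"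
  using bump_primitive_eq[of x 0] bump_eq_0 by (force simp: smooth_step_def)

lemma smooth_step_eq_1: "1 \<le> x \<Longrightarrow> smooth_step x = 1"
  using bump_primitive_eq[of 1 x] bump_eq_0 bump_primitive_1_pos by (force simp: smooth_step_def)

section \<open>Continuous functions with nonpositive weak derivative\<close>

lemma tendsto_integral_approx_identity:
  fixes E :: "real \<Rightarrow> real" and k :: "real \<Rightarrow> real \<Rightarrow> real"
  assumes E: "continuous_on {a..b} E" and x: "x \<in> {a..b}"
    and k_cont: "\<And>e. 0 < e \<Longrightarrow> continuous_on {a..b} (k e)"
    and k_nonneg: "\<And>e t. 0 < e \<Longrightarrow> 0 \<le> k e t"
    and k_supp: "\<And>e t. 0 < e \<Longrightarrow> e \<le> \<bar>t - x\<bar> \<Longrightarrow> k e t = 0"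
    and k_int: "\<forall>\<^sub>F e in at_right 0. integral {a..b} (k e) = 1"
  shows "((\<lambda>e. integral {a..b} (\<lambda>t. E t * k e t)) \<longlongrightarrow> E x) (at_right 0)"
proof (rule tendstoI)
  fix \<epsilon> :: real
  assume "0 < \<epsilon>"
  then obtain d where "0 < d"
    and d: "\<And>t. t \<in> {a..b} \<Longrightarrow> dist t x < d \<Longrightarrow> dist (E t) (E x) < \<epsilon> / 2"
    using E x unfolding continuous_on_iff by (metis half_gt_zero)
  have "\<forall>\<^sub>F e in at_right 0. e < d"
    using \<open>0 < d\<close> by (auto simp: eventually_at_right_field)
  with k_int eventually_at_right_less
  show "\<forall>\<^sub>F e in at_right 0. dist (integral {a..b} (\<lambda>t. E t * k e t)) (E x) < \<epsilon>"
  proof eventually_elim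
    case (elim e)
    have k_integrable: "k e integrable_on {a..b}"
      using k_cont elim by (simp add: integrable_continuous_interval)
    have Ek_integrable: "(\<lambda>t. (E t - E x) * k e t) integrable_on {a..b}"
      using k_cont elim E by (intro integrable_continuous_interval continuous_intros) auto
    have "integral {a..b} (\<lambda>t. E t * k e t) - E x
        = integral {a..b} (\<lambda>t. (E t - E x) * k e t + E x * k e t) - E x * integral {a..b} (k e)"
      using elim by (simp add: algebra_simps)
    also have "\<dots> = integral {a..b} (\<lambda>t. (E t - E x) * k e t)"
      using Ek_integrable integrable_on_cmult_left[OF k_integrable, of "E x"]
      by (simp add: integral_add)
    also have "norm \<dots> \<le> integral {a..b} (\<lambda>t. \<epsilon> / 2 * k e t)"
    proof (rule integral_norm_bound_integral[OF Ek_integrable])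
      show "(\<lambda>t. \<epsilon> / 2 * k e t) integrable_on {a..b}"
        using integrable_on_cmult_left[OF k_integrable, of "\<epsilon> / 2"] by simp
      show "norm ((E t - E x) * k e t) \<le> \<epsilon> / 2 * k e t" if "t \<in> {a..b}" for t
      proof (cases "\<bar>t - x\<bar> < e")
        case True
        with d[OF that] elim have "\<bar>E t - E x\<bar> \<le> \<epsilon> / 2"
          by (simp add: dist_real_def)
        then show ?thesis
          using k_nonneg[of e t] elim by (simp add: abs_mult mult_right_mono del: times_divide_eq_left)
      qed (use k_supp elim in simp)
    qed
    also have "\<dots> = \<epsilon> / 2"
      using elim by simp
    finally show ?case
      using \<open>0 < \<epsilon>\<close> by (simp add: dist_real_def)
  qed
qed

definition bump_kernel :: "real \<Rightarrow> real \<Rightarrow> real \<Rightarrow> real \<Rightarrow> real" where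
  "bump_kernel x s e t = bump ((t - x) / e + s) / (bump_primitive 1 * e)"

lemma smooth_step_affine_has_real_derivative:
  assumes "e \<noteq> 0"
  shows "((\<lambda>t. smooth_step ((t - x) / e + s)) has_real_derivative bump_kernel x s e t) (at t)"
proof -
  have "((\<lambda>t. (t - x) / e + s) has_real_derivative 1 / e) (at t)"
    using assms by (auto intro!: derivative_eq_intros)
  from DERIV_chain2[OF smooth_step_has_real_derivative this] show ?thesis
    by (simp add: bump_kernel_def)
qed

lemma bump_kernel_nonneg: "0 < e \<Longrightarrow> 0 \<le> bump_kernel x s e t"
  by (simp add: bump_kernel_def bump_nonneg bump_primitive_1_pos less_imp_le)

lemma continuous_on_bump_kernel: "0 < e \<Longrightarrow> continuous_on A (bump_kernel x s e)"
  unfolding bump_kernel_def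
  by (intro continuous_intros continuous_on_compose2[OF smooth_real_continuous_on[OF smooth_real_bump]])
     (auto simp: bump_primitive_1_pos less_imp_neq[symmetric])

lemma bump_kernel_eq_0:
  assumes "0 < e" "0 \<le> s" "s \<le> 1" "e \<le> \<bar>t - x\<bar>"
  shows "bump_kernel x s e t = 0"
proof -
  have "1 \<le> (t - x) / e \<or> (t - x) / e \<le> - 1"
    using assms by (auto simp: abs_if le_divide_eq divide_le_eq split: if_splits)
  then have "(t - x) / e + s \<le> 0 \<or> 1 \<le> (t - x) / e + s"
    using assms by linarith
  then show ?thesis
    by (simp add: bump_kernel_def bump_eq_0)
qed

lemma integral_bump_kernel:
  assumes "0 < e" "a \<le> b"
  shows "integral {a..b} (bump_kernel x s e) = smooth_step ((b - x) / e + s) - smooth_step ((a - x) / e + s)"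
  using assms by (intro integral_has_real_derivative_eq smooth_step_affine_has_real_derivative) auto

lemma tendsto_integral_bump_kernel:
  assumes "continuous_on {a..b} E" "x \<in> {a..b}" "0 \<le> s" "s \<le> 1"
    and "\<forall>\<^sub>F e in at_right 0. integral {a..b} (bump_kernel x s e) = 1"
  shows "((\<lambda>e. integral {a..b} (\<lambda>t. E t * bump_kernel x s e t)) \<longlongrightarrow> E x) (at_right 0)"
  using assms
  by (intro tendsto_integral_approx_identity continuous_on_bump_kernel bump_kernel_nonneg bump_kernel_eq_0)

definition time_cutoff :: "real \<Rightarrow> real \<Rightarrow> real \<Rightarrow> real \<Rightarrow> real" where
  "time_cutoff a b e t = smooth_step ((t - a) / e) - smooth_step ((t - b) / e + 1)"

lemma smooth_real_time_cutoff: "smooth_real (time_cutoff a b e)"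
proof -
  have "time_cutoff a b e = (\<lambda>t. smooth_step (inverse e * t + (- a / e))
      - smooth_step (inverse e * t + (1 - b / e)))"
    by (auto simp: time_cutoff_def divide_inverse algebra_simps)
  then show ?thesis
    by (simp only:) (intro smooth_real_diff smooth_real_compose_affine smooth_real_smooth_step)
qed

lemma time_cutoff_nonneg:
  assumes "0 < e" "e \<le> b - a"
  shows "0 \<le> time_cutoff a b e t"
proof -
  have "(t - b) / e + 1 = (t - b + e) / e"
    using assms by (simp add: field_simps)
  also have "\<dots> \<le> (t - a) / e"
    using assms by (intro divide_right_mono) auto
  finally show ?thesis
    by (simp add: time_cutoff_def smooth_step_mono)
qed

lemma time_cutoff_support:
  assumes "0 < e" "e \<le> b - a" "time_cutoff a b e t \<noteq> 0"
  shows "a \<le> t \<and> t \<le> b"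
proof (rule ccontr)
  assume "\<not> (a \<le> t \<and> t \<le> b)"
  then have "t < a \<or> b < t"
    by auto
  then have "time_cutoff a b e t = 0"
    using assms smooth_step_eq_0[of "(t - a) / e"] smooth_step_eq_0[of "(t - b) / e + 1"]
      smooth_step_eq_1[of "(t - a) / e"] smooth_step_eq_1[of "(t - b) / e + 1"]
    by (auto simp: time_cutoff_def field_simps)
  with assms show False
    by simp
qed

lemma deriv_time_cutoff:
  "e \<noteq> 0 \<Longrightarrow> deriv (time_cutoff a b e) t = bump_kernel a 0 e t - bump_kernel b 1 e t"
  unfolding time_cutoff_def[abs_def]
  by (intro DERIV_imp_deriv DERIV_diff smooth_step_affine_has_real_derivative
      smooth_step_affine_has_real_derivative[where s = 0, simplified])

lemma eventually_at_right_0_le: "0 < (c :: real) \<Longrightarrow> \<forall>\<^sub>F e in at_right 0. 0 < e \<and> e \<le> c"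
  by (auto simp: eventually_at_right_field intro!: exI[of _ c])

lemma tendsto_integral_mult_deriv_time_cutoff:
  fixes E :: "real \<Rightarrow> real"
  assumes E: "continuous_on {a..b} E" and "a < b"
  shows "((\<lambda>e. integral {a..b} (\<lambda>t. E t * deriv (time_cutoff a b e) t)) \<longlongrightarrow> E a - E b) (at_right 0)"
proof -
  have small: "\<forall>\<^sub>F e in at_right 0. 0 < e \<and> e \<le> b - a"
    using \<open>a < b\<close> by (simp add: eventually_at_right_0_le)
  have "((\<lambda>e. integral {a..b} (\<lambda>t. E t * bump_kernel a 0 e t)) \<longlongrightarrow> E a) (at_right 0)"
  proof (rule tendsto_integral_bump_kernel)
    show "\<forall>\<^sub>F e in at_right 0. integral {a..b} (bump_kernel a 0 e) = 1"
      using small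
      by eventually_elim (simp add: integral_bump_kernel smooth_step_eq_0 smooth_step_eq_1 le_divide_eq)
  qed (use E \<open>a < b\<close> in auto)
  moreover have "((\<lambda>e. integral {a..b} (\<lambda>t. E t * bump_kernel b 1 e t)) \<longlongrightarrow> E b) (at_right 0)"
  proof (rule tendsto_integral_bump_kernel)
    show "\<forall>\<^sub>F e in at_right 0. integral {a..b} (bump_kernel b 1 e) = 1"
      using small
    proof eventually_elim
      case (elim e)
      then have "(a - b) / e + 1 \<le> 0"
        by (simp add: field_simps)
      with elim show ?case
        by (simp add: integral_bump_kernel smooth_step_eq_0 smooth_step_eq_1)
    qed
  qed (use E \<open>a < b\<close> in auto)
  ultimately have "((\<lambda>e. integral {a..b} (\<lambda>t. E t * bump_kernel a 0 e t)
      - integral {a..b} (\<lambda>t. E t * bump_kernel b 1 e t)) \<longlongrightarrow> E a - E b) (at_right 0)"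
    by (rule tendsto_diff)
  then show ?thesis
  proof (rule Lim_transform_eventually)
    show "\<forall>\<^sub>F e in at_right 0. integral {a..b} (\<lambda>t. E t * bump_kernel a 0 e t)
        - integral {a..b} (\<lambda>t. E t * bump_kernel b 1 e t)
        = integral {a..b} (\<lambda>t. E t * deriv (time_cutoff a b e) t)"
      using small
    proof eventually_elim
      case (elim e)
      have "(\<lambda>t. E t * bump_kernel x s e t) integrable_on {a..b}" for x s
        using elim E by (intro integrable_continuous_interval continuous_intros continuous_on_bump_kernel) auto
      then show ?case
        using elim by (simp add: deriv_time_cutoff right_diff_distrib integral_diff)
    qed
  qed
qed

lemma le_if_weak_derivative_nonpos:
  fixes E :: "real \<Rightarrow> real"
  assumes E: "continuous_on {a..b} E" and "a < b"
    and weak: "\<And>\<theta>. smooth_real \<theta> \<Longrightarrow> (\<And>t. 0 \<le> \<theta> t) \<Longrightarrow> (\<And>t. \<theta> t \<noteq> 0 \<Longrightarrow> a \<le> t \<and> t \<le> b) \<Longrightarrow>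
      0 \<le> integral {a..b} (\<lambda>t. E t * deriv \<theta> t)"
  shows "E b \<le> E a"
proof -
  have "\<forall>\<^sub>F e in at_right 0. 0 < e \<and> e \<le> b - a"
    using \<open>a < b\<close> by (simp add: eventually_at_right_0_le)
  then have "\<forall>\<^sub>F e in at_right 0. 0 \<le> integral {a..b} (\<lambda>t. E t * deriv (time_cutoff a b e) t)"
    by eventually_elim (intro weak smooth_real_time_cutoff time_cutoff_nonneg time_cutoff_support; simp)
  with tendsto_integral_mult_deriv_time_cutoff[OF E \<open>a < b\<close>] have "0 \<le> E a - E b"
    by (rule tendsto_lowerbound) simp
  then show ?thesis
    by simp
qed

lemma continuous_le_if_decreasing_on_positive:
  fixes E :: "real \<Rightarrow> real"
  assumes cont: "continuous_on {0..} E" and decr: "\<And>a b. 0 < a \<Longrightarrow> a < b \<Longrightarrow> E b \<le> E a"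
    and "0 \<le> s" "s \<le> t"
  shows "E t \<le> E s"
proof (cases "0 < s \<or> s = t")
  case False
  with assms have "s = 0" "0 < t"
    by auto
  have "(E \<longlongrightarrow> E 0) (at 0 within {0..})"
    using cont by (simp add: continuous_on_def)
  then have "(E \<longlongrightarrow> E 0) (at_right 0)"
    by (rule tendsto_within_subset) auto
  moreover have "\<forall>\<^sub>F a in at_right 0. E t \<le> E a"
    using \<open>0 < t\<close> decr by (auto simp: eventually_at_right_field intro!: exI[of _ t])
  ultimately show ?thesis
    using \<open>s = 0\<close> by (intro tendsto_lowerbound) auto
qed (use assms in \<open>auto simp: le_less\<close>)

lemma smooth_real_funpow_deriv: "smooth_real f \<Longrightarrow> smooth_real ((deriv ^^ n) f)"
  by (induction n) (simp_all add: smooth_real_deriv)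

lemma smooth_real_if_funpow_deriv:
  "smooth_real \<theta> \<Longrightarrow> smooth_real (\<lambda>t. if P then (deriv ^^ n) \<theta> t else 0)"
  by (cases P) (simp_all add: smooth_real_funpow_deriv smooth_real_const)

lemma has_real_derivative_shift_at_0:
  assumes "(f has_real_derivative D) (at t)"
  shows "((\<lambda>s. f (t + s)) has_real_derivative D) (at 0)"
proof -
  have "((\<lambda>s. f (s + t)) has_real_derivative D) (at 0)"
    using assms DERIV_shift[of f D 0 t] by simp
  then show ?thesis
    by (simp add: add.commute)
qed

lemma dir_fun_time_only_differentiable:
  fixes H :: "real \<Rightarrow> real"
  assumes "smooth_real H"
  shows "dir_fun d (\<lambda>t (\<omega> :: 'n::finite bohr). H t) t \<omega> differentiable (at 0)"
  using has_real_derivative_shift_at_0[OF smooth_real_has_real_derivative[OF assms]]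
  by (cases d) (auto simp: dir_fun_def real_differentiable_def)

lemma pderiv_dir_time_only:
  fixes H :: "real \<Rightarrow> real"
  assumes "smooth_real H"
  shows "pderiv_dir d (\<lambda>t (\<omega> :: 'n::finite bohr). H t) = (\<lambda>t \<omega>. if d = None then deriv H t else 0)"
  using has_real_derivative_shift_at_0[OF smooth_real_has_real_derivative[OF assms]]
  by (cases d) (auto simp: pderiv_dir_def dir_fun_def intro!: ext DERIV_imp_deriv)

lemma iter_pderiv_time_only:
  fixes \<theta> :: "real \<Rightarrow> real"
  assumes "smooth_real \<theta>"
  shows "iter_pderiv ds (\<lambda>t (\<omega> :: 'n::finite bohr). \<theta> t)
    = (\<lambda>t \<omega>. if set ds \<subseteq> {None} then (deriv ^^ length ds) \<theta> t else 0)"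
proof (induction ds)
  case (Cons d ds)
  let ?H = "\<lambda>t. if set ds \<subseteq> {None} then (deriv ^^ length ds) \<theta> t else 0"
  have "smooth_real ?H"
    using assms by (rule smooth_real_if_funpow_deriv)
  then have "iter_pderiv (d # ds) (\<lambda>t (\<omega> :: 'n bohr). \<theta> t)
      = (\<lambda>t \<omega>. if d = None then deriv ?H t else 0)"
    using Cons.IH by (simp add: pderiv_dir_time_only)
  then show ?case
    by (cases "set ds \<subseteq> {None}") (auto simp: fun_eq_iff)
qed simp

lemma test_fun_time_only:
  fixes \<theta> :: "real \<Rightarrow> real"
  assumes "smooth_real \<theta>" and "0 < a" and "\<And>t. \<theta> t \<noteq> 0 \<Longrightarrow> a \<le> t \<and> t \<le> b"
  shows "test_fun (\<lambda>t (\<omega> :: 'n::finite bohr). \<theta> t)"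
  unfolding test_fun_def
proof (intro conjI allI)
  show "\<exists>a b. 0 < a \<and> (\<forall>t (\<omega> :: 'n bohr). \<theta> t \<noteq> 0 \<longrightarrow> a \<le> t \<and> t \<le> b)"
    using assms by blast
  fix ds :: "'n option list"
  define H where "H t = (if set ds \<subseteq> {None} then (deriv ^^ length ds) \<theta> t else 0)" for t
  have H: "smooth_real H"
    unfolding H_def[abs_def] by (rule smooth_real_if_funpow_deriv[OF assms(1)])
  have iter: "iter_pderiv ds (\<lambda>t (\<omega> :: 'n bohr). \<theta> t) = (\<lambda>t \<omega>. H t)"
    unfolding H_def by (rule iter_pderiv_time_only[OF assms(1)])
  have "continuous_map (prod_topology euclideanreal bohr_top) euclideanreal (H \<circ> fst)"
    using smooth_real_continuous_on[OF H] by (intro continuous_map_compose[OF continuous_map_fst]) simp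
  then show "continuous_map (prod_topology euclideanreal bohr_top) euclideanreal
      (\<lambda>(t, \<omega>). iter_pderiv ds (\<lambda>t (\<omega> :: 'n bohr). \<theta> t) t \<omega>)"
    by (simp add: iter case_prod_unfold comp_def)
  show "dir_fun d (iter_pderiv ds (\<lambda>t (\<omega> :: 'n bohr). \<theta> t)) t \<omega> differentiable (at 0)" for d t \<omega>
    unfolding iter by (rule dir_fun_time_only_differentiable[OF H])
qed

abbreviation lborel_pos :: "real measure" where
  "lborel_pos \<equiv> restrict_space lborel {0<..}"

lemma pair_sigma_finite_lborel_pos: "sigma_finite_measure M \<Longrightarrow> pair_sigma_finite lborel_pos M"
  unfolding pair_sigma_finite_def
  by (auto intro: sigma_finite_measure_restrict_space sigma_finite_lborel)

lemma AE_lborel_obtain_between: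
  assumes "AE x in lborel. P x" and "a < (b :: real)"
  obtains x where "a < x" "x < b" "P x"
proof -
  have "\<exists>x\<in>{a<..<b}. P x"
  proof (rule ccontr)
    assume "\<not> (\<exists>x\<in>{a<..<b}. P x)"
    then have "AE x in lborel. x \<notin> {a<..<b}"
      using assms(1) by (auto elim!: eventually_mono)
    then have "{a<..<b} \<in> null_sets lborel"
      by (simp add: AE_iff_null_sets)
    with \<open>a < b\<close> show False
      by (simp add: null_sets_def)
  qed
  with that show thesis
    by auto
qed

lemma AE_abs_le_of_L1_approx:
  fixes g :: "'a \<Rightarrow> real"
  assumes "finite_measure M" and "integrable M g"
    and approx: "\<And>\<epsilon>. 0 < \<epsilon> \<Longrightarrow>
      \<exists>f. integrable M f \<and> (AE x in M. \<bar>f x\<bar> \<le> C) \<and> (\<integral>x. \<bar>f x - g x\<bar> \<partial>M) < \<epsilon>"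
  shows "AE x in M. \<bar>g x\<bar> \<le> C"
proof -
  interpret finite_measure M by fact
  define excess where "excess x = max (\<bar>g x\<bar> - C) 0" for x
  have excess_integrable: "integrable M excess"
  proof (rule Bochner_Integration.integrable_bound)
    show "integrable M (\<lambda>x. \<bar>g x\<bar> + \<bar>C\<bar>)"
      using \<open>integrable M g\<close> by auto
    show "excess \<in> borel_measurable M"
      using \<open>integrable M g\<close> unfolding excess_def by measurable
  qed (auto simp: excess_def)
  have "integral\<^sup>L M excess < \<epsilon>" if \<epsilon>: "0 < \<epsilon>" for \<epsilon>
  proof -
    obtain f where f: "integrable M f" "AE x in M. \<bar>f x\<bar> \<le> C" "(\<integral>x. \<bar>f x - g x\<bar> \<partial>M) < \<epsilon>"
      using approx[OF \<epsilon>] by blast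
    have "integral\<^sup>L M excess \<le> (\<integral>x. \<bar>f x - g x\<bar> \<partial>M)"
    proof (rule integral_mono_AE[OF excess_integrable])
      show "integrable M (\<lambda>x. \<bar>f x - g x\<bar>)"
        using f(1) \<open>integrable M g\<close> by auto
      show "AE x in M. excess x \<le> \<bar>f x - g x\<bar>"
        using f(2) by eventually_elim (auto simp: excess_def)
    qed
    with f(3) show ?thesis
      by simp
  qed
  then have "integral\<^sup>L M excess \<le> 0"
    by (metis less_irrefl not_le)
  moreover have "0 \<le> integral\<^sup>L M excess"
    by (simp add: excess_def)
  ultimately have "integral\<^sup>L M excess = 0"
    by simp
  then have "AE x in M. excess x = 0"
    using integral_nonneg_eq_0_iff_AE[OF excess_integrable] by (simp add: excess_def)
  then show ?thesis
    by eventually_elim (auto simp: excess_def)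
qed

lemma AE_bound_at_time_of_AE_bound:
  fixes M :: "'a measure" and u :: "real \<Rightarrow> 'a \<Rightarrow> real"
  assumes "finite_measure M"
    and bound: "AE p in lborel_pos \<Otimes>\<^sub>M M. \<bar>u (fst p) (snd p)\<bar> \<le> C"
    and integrable: "\<And>t. 0 \<le> t \<Longrightarrow> integrable M (u t)"
    and L1_cont: "((\<lambda>t. \<integral>\<omega>. \<bar>u t \<omega> - u s \<omega>\<bar> \<partial>M) \<longlongrightarrow> 0) (at s within {0..})"
    and "0 \<le> s"
  shows "AE \<omega> in M. \<bar>u s \<omega>\<bar> \<le> C"
proof -
  interpret finite_measure M by fact
  interpret pair_sigma_finite lborel_pos M
    by (rule pair_sigma_finite_lborel_pos) unfold_locales
  have "AE t in lborel_pos. AE \<omega> in M. \<bar>u t \<omega>\<bar> \<le> C"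
    using AE_pair[OF bound] by simp
  then have good: "AE t in lborel. 0 < t \<longrightarrow> (AE \<omega> in M. \<bar>u t \<omega>\<bar> \<le> C)"
    by (subst (asm) AE_restrict_space_iff) auto
  show ?thesis
  proof (rule AE_abs_le_of_L1_approx[OF \<open>finite_measure M\<close> integrable[OF \<open>0 \<le> s\<close>]])
    fix \<epsilon> :: real
    assume "0 < \<epsilon>"
    then obtain d where "0 < d" and d: "\<And>t. t \<in> {0..} \<Longrightarrow> t \<noteq> s \<Longrightarrow> dist t s < d \<Longrightarrow>
        (\<integral>\<omega>. \<bar>u t \<omega> - u s \<omega>\<bar> \<partial>M) < \<epsilon>"
      using order_tendstoD(2)[OF L1_cont] unfolding eventually_at by blast
    obtain t where "s < t" "t < s + d" "0 < t \<longrightarrow> (AE \<omega> in M. \<bar>u t \<omega>\<bar> \<le> C)"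
      using AE_lborel_obtain_between[OF good, of s "s + d"] \<open>0 < d\<close> by auto
    then show "\<exists>f. integrable M f \<and> (AE \<omega> in M. \<bar>f \<omega>\<bar> \<le> C) \<and> (\<integral>\<omega>. \<bar>f \<omega> - u s \<omega>\<bar> \<partial>M) < \<epsilon>"
      using integrable[of t] d[of t] \<open>0 \<le> s\<close> by (intro exI[of _ "u t"]) (auto simp: dist_real_def)
  qed
qed

lemma power2_le_of_abs_le: "\<bar>x\<bar> \<le> C \<Longrightarrow> x\<^sup>2 \<le> (C :: real)\<^sup>2"
  by (metis abs_ge_zero order_trans power2_le_iff_abs_le)

lemma integrable_square_of_AE_bound:
  fixes f :: "'a \<Rightarrow> real"
  assumes "finite_measure M" and "f \<in> borel_measurable M" and "AE x in M. \<bar>f x\<bar> \<le> C"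
  shows "integrable M (\<lambda>x. (f x)\<^sup>2)"
proof -
  interpret finite_measure M by fact
  show ?thesis
  proof (rule Bochner_Integration.integrable_bound[where f = "\<lambda>_. C\<^sup>2"])
    show "AE x in M. norm ((f x)\<^sup>2) \<le> norm (C\<^sup>2)"
      using assms(3) by eventually_elim (simp add: power2_le_of_abs_le)
  qed (use assms(2) in auto)
qed

lemma abs_integral_square_diff_le:
  fixes f g :: "'a \<Rightarrow> real"
  assumes "finite_measure M" and "integrable M f" "integrable M g"
    and "AE x in M. \<bar>f x\<bar> \<le> C" "AE x in M. \<bar>g x\<bar> \<le> C"
  shows "\<bar>(\<integral>x. (f x)\<^sup>2 \<partial>M) - (\<integral>x. (g x)\<^sup>2 \<partial>M)\<bar> \<le> 2 * \<bar>C\<bar> * (\<integral>x. \<bar>f x - g x\<bar> \<partial>M)"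
proof -
  have square_integrable: "integrable M (\<lambda>x. (f x)\<^sup>2)" "integrable M (\<lambda>x. (g x)\<^sup>2)"
    using assms by (auto intro: integrable_square_of_AE_bound)
  then have "\<bar>(\<integral>x. (f x)\<^sup>2 \<partial>M) - (\<integral>x. (g x)\<^sup>2 \<partial>M)\<bar> = \<bar>\<integral>x. (f x)\<^sup>2 - (g x)\<^sup>2 \<partial>M\<bar>"
    by simp
  also have "\<dots> \<le> (\<integral>x. \<bar>(f x)\<^sup>2 - (g x)\<^sup>2\<bar> \<partial>M)"
    by (rule integral_abs_bound)
  also have "\<dots> \<le> (\<integral>x. 2 * \<bar>C\<bar> * \<bar>f x - g x\<bar> \<partial>M)"
  proof (rule integral_mono_AE)
    show "integrable M (\<lambda>x. \<bar>(f x)\<^sup>2 - (g x)\<^sup>2\<bar>)"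
      using square_integrable by auto
    show "integrable M (\<lambda>x. 2 * \<bar>C\<bar> * \<bar>f x - g x\<bar>)"
      using assms(2,3) by auto
    show "AE x in M. \<bar>(f x)\<^sup>2 - (g x)\<^sup>2\<bar> \<le> 2 * \<bar>C\<bar> * \<bar>f x - g x\<bar>"
      using assms(4,5)
    proof eventually_elim
      case (elim x)
      have "\<bar>(f x)\<^sup>2 - (g x)\<^sup>2\<bar> = \<bar>f x + g x\<bar> * \<bar>f x - g x\<bar>"
        by (simp add: power2_eq_square abs_mult[symmetric] algebra_simps)
      also have "\<dots> \<le> 2 * \<bar>C\<bar> * \<bar>f x - g x\<bar>"
        using elim by (intro mult_right_mono) auto
      finally show ?case .
    qed
  qed
  finally show ?thesis
    by simp
qed

lemma continuous_on_integral_square: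
  fixes M :: "'a measure" and u :: "real \<Rightarrow> 'a \<Rightarrow> real"
  assumes "finite_measure M"
    and bound: "\<And>s. 0 \<le> s \<Longrightarrow> AE \<omega> in M. \<bar>u s \<omega>\<bar> \<le> C"
    and integrable: "\<And>t. 0 \<le> t \<Longrightarrow> integrable M (u t)"
    and L1_cont: "\<And>s. 0 \<le> s \<Longrightarrow> ((\<lambda>t. \<integral>\<omega>. \<bar>u t \<omega> - u s \<omega>\<bar> \<partial>M) \<longlongrightarrow> 0) (at s within {0..})"
  shows "continuous_on {0..} (\<lambda>t. \<integral>\<omega>. (u t \<omega>)\<^sup>2 \<partial>M)"
  unfolding continuous_on_def
proof
  fix s :: real
  assume "s \<in> {0..}"
  then have "0 \<le> s" by simp
  have "\<forall>\<^sub>F t in at s within {0..}.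
      norm ((\<integral>\<omega>. (u t \<omega>)\<^sup>2 \<partial>M) - (\<integral>\<omega>. (u s \<omega>)\<^sup>2 \<partial>M))
      \<le> 2 * \<bar>C\<bar> * (\<integral>\<omega>. \<bar>u t \<omega> - u s \<omega>\<bar> \<partial>M)"
    unfolding eventually_at_filter
    using \<open>0 \<le> s\<close> assms(1) integrable bound
    by (intro always_eventually) (simp add: abs_integral_square_diff_le)
  then have "((\<lambda>t. (\<integral>\<omega>. (u t \<omega>)\<^sup>2 \<partial>M) - (\<integral>\<omega>. (u s \<omega>)\<^sup>2 \<partial>M)) \<longlongrightarrow> 0) (at s within {0..})"
    by (rule Lim_null_comparison) (rule tendsto_mult_right_zero[OF L1_cont[OF \<open>0 \<le> s\<close>]])
  then show "((\<lambda>t. \<integral>\<omega>. (u t \<omega>)\<^sup>2 \<partial>M) \<longlongrightarrow> (\<integral>\<omega>. (u s \<omega>)\<^sup>2 \<partial>M)) (at s within {0..})"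
    by (simp add: LIM_zero_iff)
qed

text \<open>No integrability of \<open>f\<close> is needed: otherwise both integrals are \<open>0\<close> by convention.\<close>

lemma integral_nonneg_if_integral_diff_nonneg:
  fixes f g :: "'a \<Rightarrow> real"
  assumes "integrable M g" and "AE x in M. 0 \<le> g x" and "0 \<le> (\<integral>x. f x - g x \<partial>M)"
  shows "0 \<le> integral\<^sup>L M f"
proof (cases "integrable M f")
  case True
  with assms show ?thesis
    using integral_nonneg_AE[OF assms(2)] by simp
qed (simp add: not_integrable_integral_eq)

lemma bounded_if_support_Icc:
  fixes h :: "real \<Rightarrow> real"
  assumes "continuous_on {a..b} h" and "\<And>t. h t \<noteq> 0 \<Longrightarrow> a \<le> t \<and> t \<le> b"
  obtains B where "\<And>t. \<bar>h t\<bar> \<le> B"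
proof -
  obtain B where B: "\<And>t. t \<in> {a..b} \<Longrightarrow> norm (h t) \<le> B"
    using continuous_on_compact_bound[OF compact_Icc assms(1)] by blast
  have "\<bar>h t\<bar> \<le> max B 0" for t
    using assms(2)[of t] B[of t] by (cases "h t = 0") auto
  then show thesis
    by (rule that)
qed

lemma borel_measurable_lborel_pos_continuous:
  "continuous_on UNIV (h :: real \<Rightarrow> real) \<Longrightarrow> h \<in> borel_measurable lborel_pos"
  by (intro measurable_restrict_space1) (simp add: borel_measurable_continuous_onI)

lemma integrable_mult_bounded:
  fixes f g :: "'a \<Rightarrow> real"
  assumes "integrable M f" and "g \<in> borel_measurable M" and "\<And>x. \<bar>g x\<bar> \<le> B"
  shows "integrable M (\<lambda>x. f x * g x)"
proof (rule Bochner_Integration.integrable_bound[where f = "\<lambda>x. B * f x"])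
  show "AE x in M. norm (f x * g x) \<le> norm (B * f x)"
  proof (rule AE_I2)
    fix x
    have "\<bar>g x\<bar> \<le> \<bar>B\<bar>"
      using assms(3)[of x] by linarith
    then show "norm (f x * g x) \<le> norm (B * f x)"
      by (simp add: abs_mult) (metis abs_ge_zero mult.commute mult_left_mono)
  qed
qed (use assms(1,2) in auto)

lemma integral_pair_time_weight:
  fixes M :: "'a measure" and U :: "real \<Rightarrow> 'a \<Rightarrow> real" and w :: "real \<Rightarrow> real"
  assumes "finite_measure M"
    and U_meas: "(\<lambda>p. U (fst p) (snd p)) \<in> borel_measurable (lborel_pos \<Otimes>\<^sub>M M)"
    and U_bound: "AE p in lborel_pos \<Otimes>\<^sub>M M. \<bar>U (fst p) (snd p)\<bar> \<le> C"
    and U_cont: "continuous_on {a..b} (\<lambda>t. \<integral>\<omega>. U t \<omega> \<partial>M)"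
    and w: "continuous_on UNIV w" and "0 < a" and w_supp: "\<And>t. w t \<noteq> 0 \<Longrightarrow> a \<le> t \<and> t \<le> b"
  shows "(\<integral>p. U (fst p) (snd p) * w (fst p) \<partial>(lborel_pos \<Otimes>\<^sub>M M))
    = integral {a..b} (\<lambda>t. (\<integral>\<omega>. U t \<omega> \<partial>M) * w t)"
proof -
  interpret finite_measure M by fact
  obtain B where B: "\<And>t. \<bar>w t\<bar> \<le> B"
    using bounded_if_support_Icc[OF continuous_on_subset[OF w subset_UNIV] w_supp] by blast
  have ab: "{a..b} \<in> sets lborel_pos"
    using \<open>0 < a\<close> by (subst sets_restrict_space_iff) auto
  have "emeasure (lborel_pos \<Otimes>\<^sub>M M) ({a..b} \<times> space M) = emeasure lborel_pos {a..b} * emeasure M (space M)"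
    using ab by (rule emeasure_pair_measure_Times) auto
  also have "\<dots> = emeasure lborel {a..b} * emeasure M (space M)"
    using \<open>0 < a\<close> by (subst emeasure_restrict_space) auto
  also have "\<dots> < \<infinity>"
    by (simp add: emeasure_lborel_Icc_eq ennreal_mult_eq_top_iff emeasure_finite flip: less_top)
  finally have strip_finite: "emeasure (lborel_pos \<Otimes>\<^sub>M M) ({a..b} \<times> space M) < \<infinity>" .
  have integrable: "integrable (lborel_pos \<Otimes>\<^sub>M M) (\<lambda>p. U (fst p) (snd p) * w (fst p))"
  proof (rule integrableI_bounded_set[where A = "{a..b} \<times> space M" and B = "C * B"])
    show "{a..b} \<times> space M \<in> sets (lborel_pos \<Otimes>\<^sub>M M)"
      using ab by auto
    show "(\<lambda>p. U (fst p) (snd p) * w (fst p)) \<in> borel_measurable (lborel_pos \<Otimes>\<^sub>M M)"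
      using U_meas borel_measurable_lborel_pos_continuous[OF w] by measurable
    show "AE p in lborel_pos \<Otimes>\<^sub>M M. p \<in> {a..b} \<times> space M \<longrightarrow> norm (U (fst p) (snd p) * w (fst p)) \<le> C * B"
      using U_bound
    proof eventually_elim
      case (elim p)
      then have "0 \<le> C"
        by (meson abs_ge_zero order_trans)
      with elim B[of "fst p"] show ?case
        by (simp add: abs_mult mult_mono')
    qed
    show "AE p in lborel_pos \<Otimes>\<^sub>M M. p \<notin> {a..b} \<times> space M \<longrightarrow> U (fst p) (snd p) * w (fst p) = 0"
      using w_supp by (intro AE_I2) (force simp: space_pair_measure)
  qed (fact strip_finite)
  interpret pair_sigma_finite lborel_pos M
    by (rule pair_sigma_finite_lborel_pos) unfold_locales
  have "(\<integral>p. U (fst p) (snd p) * w (fst p) \<partial>(lborel_pos \<Otimes>\<^sub>M M))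
      = (\<integral>t. (\<integral>\<omega>. U t \<omega> \<partial>M) * w t \<partial>lborel_pos)"
    using integral_fst'[OF integrable] by simp
  also have "\<dots> = (\<integral>t. indicator {0<..} t *\<^sub>R ((\<integral>\<omega>. U t \<omega> \<partial>M) * w t) \<partial>lborel)"
    by (rule integral_restrict_space) simp
  also have "\<dots> = (\<integral>t. indicator {a..b} t *\<^sub>R ((\<integral>\<omega>. U t \<omega> \<partial>M) * w t) \<partial>lborel)"
    using \<open>0 < a\<close> w_supp by (intro Bochner_Integration.integral_cong) (force simp: indicator_def)+
  also have "\<dots> = integral {a..b} (\<lambda>t. (\<integral>\<omega>. U t \<omega> \<partial>M) * w t)"
    using set_borel_integral_eq_integral(2)[OF borel_integrable_atLeastAtMost'
        [OF continuous_on_mult[OF U_cont continuous_on_subset[OF w subset_UNIV]]]]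
    by (simp add: set_lebesgue_integral_def)
  finally show ?thesis .
qed

section \<open>The energy inequality\<close>

lemma entropy_solutionE:
  fixes \<sigma> :: "'n::finite \<Rightarrow> 'k::finite \<Rightarrow> real \<Rightarrow> real"
  assumes "entropy_solution M f A \<sigma> u0 u"
  obtains g :: "'k \<Rightarrow> real \<Rightarrow> 'n bohr \<Rightarrow> real" where
    "\<forall>k. (\<lambda>(t, \<omega>). g k t \<omega>) \<in> borel_measurable (ST M) \<and>
         integrable (ST M) (\<lambda>(t, \<omega>). (g k t \<omega>)\<^sup>2)"
    "\<forall>(\<eta> :: real \<Rightarrow> real) \<eta>1 \<eta>2 (q :: 'n \<Rightarrow> real \<Rightarrow> real) (r :: 'n \<Rightarrow> 'n \<Rightarrow> real \<Rightarrow> real) \<phi>.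
      convex_on UNIV \<eta> \<longrightarrow>
      (\<forall>v. (\<eta> has_real_derivative \<eta>1 v) (at v)) \<longrightarrow>
      (\<forall>v. (\<eta>1 has_real_derivative \<eta>2 v) (at v)) \<longrightarrow>
      continuous_on UNIV \<eta>2 \<longrightarrow>
      (\<forall>i v. (q i has_real_derivative \<eta>1 v * deriv (f i) v) (at v)) \<longrightarrow>
      (\<forall>i j v. (r i j has_real_derivative \<eta>1 v * deriv (A i j) v) (at v)) \<longrightarrow>
      test_fun \<phi> \<longrightarrow> (\<forall>t \<omega>. 0 \<le> \<phi> t \<omega>) \<longrightarrow>
      0 \<le> (\<integral>p. (let t = fst p; \<omega> = snd p; w = u t \<omega> in
               \<eta> w * iter_pderiv [None] \<phi> t \<omega>
             + (\<Sum>i\<in>UNIV. q i w * iter_pderiv [Some i] \<phi> t \<omega>)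
             + (\<Sum>i\<in>UNIV. \<Sum>j\<in>UNIV. r i j w * iter_pderiv [Some i, Some j] \<phi> t \<omega>)
             - \<eta>2 w * (\<Sum>k\<in>UNIV. (g k t \<omega>)\<^sup>2) * \<phi> t \<omega>) \<partial>ST M)"
  using assms unfolding entropy_solution_def by blast

lemma entropy_solution_square_entropy_inequality:
  fixes M :: "'n::finite bohr measure" and \<sigma> :: "'n \<Rightarrow> 'k::finite \<Rightarrow> real \<Rightarrow> real"
    and u :: "real \<Rightarrow> 'n bohr \<Rightarrow> real" and \<theta> :: "real \<Rightarrow> real"
  assumes entropy: "entropy_solution M f A \<sigma> u0 u"
    and f_smooth: "\<And>i. smooth_real (f i)" and A_smooth: "\<And>i j. smooth_real (A i j)"
    and \<theta>: "smooth_real \<theta>" and \<theta>_nonneg: "\<And>t. 0 \<le> \<theta> t"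
    and "0 < a" and \<theta>_supp: "\<And>t. \<theta> t \<noteq> 0 \<Longrightarrow> a \<le> t \<and> t \<le> b"
  shows "\<exists>g :: 'k \<Rightarrow> real \<Rightarrow> 'n bohr \<Rightarrow> real.
    (\<forall>k. integrable (ST M) (\<lambda>p. (g k (fst p) (snd p))\<^sup>2)) \<and>
    0 \<le> (\<integral>p. (u (fst p) (snd p))\<^sup>2 * deriv \<theta> (fst p)
      - 2 * (\<Sum>k\<in>UNIV. (g k (fst p) (snd p))\<^sup>2) * \<theta> (fst p) \<partial>ST M)"
proof (rule entropy_solutionE[OF entropy], goal_cases)
  case (1 g)
  define q :: "'n \<Rightarrow> real \<Rightarrow> real" where "q i w = (LBINT v=0..w. 2 * v * deriv (f i) v)" for i w
  define r :: "'n \<Rightarrow> 'n \<Rightarrow> real \<Rightarrow> real" where "r i j w = (LBINT v=0..w. 2 * v * deriv (A i j) v)" for i j w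
  have q: "(q i has_real_derivative 2 * v * deriv (f i) v) (at v)" for i v
    using has_real_derivative_interval_integral[of "\<lambda>v. 2 * v * deriv (f i) v" 0 v]
      smooth_real_continuous_on[OF smooth_real_deriv[OF f_smooth]]
    by (simp add: q_def[abs_def] zero_ereal_def continuous_intros)
  have r: "(r i j has_real_derivative 2 * v * deriv (A i j) v) (at v)" for i j v
    using has_real_derivative_interval_integral[of "\<lambda>v. 2 * v * deriv (A i j) v" 0 v]
      smooth_real_continuous_on[OF smooth_real_deriv[OF A_smooth]]
    by (simp add: r_def[abs_def] zero_ereal_def continuous_intros)
  have "0 \<le> (\<integral>p. (let t = fst p; \<omega> = snd p; w = u t \<omega> in
               w\<^sup>2 * iter_pderiv [None] (\<lambda>t \<omega>. \<theta> t) t \<omega>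
             + (\<Sum>i\<in>UNIV. q i w * iter_pderiv [Some i] (\<lambda>t \<omega>. \<theta> t) t \<omega>)
             + (\<Sum>i\<in>UNIV. \<Sum>j\<in>UNIV. r i j w * iter_pderiv [Some i, Some j] (\<lambda>t \<omega>. \<theta> t) t \<omega>)
             - 2 * (\<Sum>k\<in>UNIV. (g k t \<omega>)\<^sup>2) * \<theta> t) \<partial>ST M)"
    by (rule 1(2)[rule_format])
       (auto intro!: derivative_eq_intros q r test_fun_time_only[OF \<theta> \<open>0 < a\<close> \<theta>_supp]
         convex_power_even \<theta>_nonneg)
  then show ?case
    using 1(1) by (intro exI[of _ g]) (simp add: iter_pderiv_time_only[OF \<theta>] Let_def case_prod_beta')
qed

lemma entropy_solution_square_time_test:
  fixes M :: "'n::finite bohr measure" and \<sigma> :: "'n \<Rightarrow> 'k::finite \<Rightarrow> real \<Rightarrow> real"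
    and u :: "real \<Rightarrow> 'n bohr \<Rightarrow> real" and \<theta> :: "real \<Rightarrow> real"
  assumes entropy: "entropy_solution M f A \<sigma> u0 u"
    and f_smooth: "\<And>i. smooth_real (f i)" and A_smooth: "\<And>i j. smooth_real (A i j)"
    and \<theta>: "smooth_real \<theta>" and \<theta>_nonneg: "\<And>t. 0 \<le> \<theta> t"
    and "0 < a" and \<theta>_supp: "\<And>t. \<theta> t \<noteq> 0 \<Longrightarrow> a \<le> t \<and> t \<le> b"
  shows "0 \<le> (\<integral>p. (u (fst p) (snd p))\<^sup>2 * deriv \<theta> (fst p) \<partial>ST M)"
proof -
  obtain g :: "'k \<Rightarrow> real \<Rightarrow> 'n bohr \<Rightarrow> real"
    where g_square: "\<And>k. integrable (ST M) (\<lambda>p. (g k (fst p) (snd p))\<^sup>2)"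
      and diff_nonneg: "0 \<le> (\<integral>p. (u (fst p) (snd p))\<^sup>2 * deriv \<theta> (fst p)
        - 2 * (\<Sum>k\<in>UNIV. (g k (fst p) (snd p))\<^sup>2) * \<theta> (fst p) \<partial>ST M)"
    using entropy_solution_square_entropy_inequality[OF assms] by blast
  obtain B where B: "\<And>t. \<bar>\<theta> t\<bar> \<le> B"
    using bounded_if_support_Icc[OF smooth_real_continuous_on[OF \<theta>] \<theta>_supp] by blast
  have dissipation_integrable:
    "integrable (ST M) (\<lambda>p. 2 * (\<Sum>k\<in>UNIV. (g k (fst p) (snd p))\<^sup>2) * \<theta> (fst p))"
  proof (rule integrable_mult_bounded)
    show "integrable (ST M) (\<lambda>p. 2 * (\<Sum>k\<in>UNIV. (g k (fst p) (snd p))\<^sup>2))"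
      using g_square by auto
    show "(\<lambda>p. \<theta> (fst p)) \<in> borel_measurable (ST M)"
      using borel_measurable_lborel_pos_continuous[OF smooth_real_continuous_on[OF \<theta>]]
      unfolding ST_def by measurable
    show "\<bar>\<theta> (fst p)\<bar> \<le> B" for p
      by (rule B)
  qed
  have dissipation_nonneg: "AE p in ST M. 0 \<le> 2 * (\<Sum>k\<in>UNIV. (g k (fst p) (snd p))\<^sup>2) * \<theta> (fst p)"
    by (intro AE_I2 mult_nonneg_nonneg sum_nonneg) (simp_all add: \<theta>_nonneg)
  show ?thesis
    by (rule integral_nonneg_if_integral_diff_nonneg[OF dissipation_integrable dissipation_nonneg diff_nonneg])
qed

lemma deriv_support_Icc:
  fixes h :: "real \<Rightarrow> real"
  assumes supp: "\<And>t. h t \<noteq> 0 \<Longrightarrow> a \<le> t \<and> t \<le> b" and "deriv h t \<noteq> 0"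
  shows "a \<le> t \<and> t \<le> b"
proof (rule ccontr)
  assume "\<not> (a \<le> t \<and> t \<le> b)"
  then have "t \<in> {..<a} \<union> {b<..}"
    by auto
  then have "\<forall>\<^sub>F s in nhds t. s \<in> {..<a} \<union> {b<..}"
    by (intro eventually_nhds_in_open) auto
  then have "\<forall>\<^sub>F s in nhds t. h s = 0"
    by eventually_elim (use supp in force)
  then have "deriv h t = deriv (\<lambda>_. 0) t"
    by (rule deriv_cong_ev) simp
  with \<open>deriv h t \<noteq> 0\<close> show False
    by simp
qed

lemma entropy_solution_energy_weakly_decreasing:
  fixes M :: "'n::finite bohr measure" and \<sigma> :: "'n \<Rightarrow> 'k::finite \<Rightarrow> real \<Rightarrow> real"
    and u :: "real \<Rightarrow> 'n bohr \<Rightarrow> real" and \<theta> :: "real \<Rightarrow> real"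
  assumes "finite_measure M" and entropy: "entropy_solution M f A \<sigma> u0 u"
    and f_smooth: "\<And>i. smooth_real (f i)" and A_smooth: "\<And>i j. smooth_real (A i j)"
    and bound: "AE p in ST M. \<bar>u (fst p) (snd p)\<bar> \<le> C"
    and energy_cont: "continuous_on {a..b} (\<lambda>t. \<integral>\<omega>. (u t \<omega>)\<^sup>2 \<partial>M)"
    and \<theta>: "smooth_real \<theta>" and \<theta>_nonneg: "\<And>t. 0 \<le> \<theta> t"
    and "0 < a" and \<theta>_supp: "\<And>t. \<theta> t \<noteq> 0 \<Longrightarrow> a \<le> t \<and> t \<le> b"
  shows "0 \<le> integral {a..b} (\<lambda>t. (\<integral>\<omega>. (u t \<omega>)\<^sup>2 \<partial>M) * deriv \<theta> t)"
proof -
  have "(\<lambda>(t, \<omega>). u t \<omega>) \<in> borel_measurable (ST M)"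
    using entropy unfolding entropy_solution_def by blast
  then have "(\<lambda>p. (u (fst p) (snd p))\<^sup>2) \<in> borel_measurable (ST M)"
    by (simp add: case_prod_beta')
  moreover have "AE p in ST M. \<bar>(u (fst p) (snd p))\<^sup>2\<bar> \<le> C\<^sup>2"
    using bound by eventually_elim (simp add: power2_le_of_abs_le)
  ultimately have "(\<integral>p. (u (fst p) (snd p))\<^sup>2 * deriv \<theta> (fst p) \<partial>ST M)
      = integral {a..b} (\<lambda>t. (\<integral>\<omega>. (u t \<omega>)\<^sup>2 \<partial>M) * deriv \<theta> t)"
    unfolding ST_def
    by (intro integral_pair_time_weight \<open>finite_measure M\<close> energy_cont \<open>0 < a\<close>
        smooth_real_continuous_on[OF smooth_real_deriv[OF \<theta>]] deriv_support_Icc[OF \<theta>_supp])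
  with entropy_solution_square_time_test[OF entropy f_smooth A_smooth \<theta> \<theta>_nonneg \<open>0 < a\<close> \<theta>_supp]
  show ?thesis
    by simp
qed

theorem lemma3p5:
  fixes M :: "'n::finite bohr measure"
    and f :: "'n \<Rightarrow> real \<Rightarrow> real"
    and A :: "'n \<Rightarrow> 'n \<Rightarrow> real \<Rightarrow> real"
    and \<sigma> :: "'n \<Rightarrow> 'k::finite \<Rightarrow> real \<Rightarrow> real"
    and u0 :: "'n bohr \<Rightarrow> real"
    and u :: "real \<Rightarrow> 'n bohr \<Rightarrow> real"
  assumes haar: "bohr_haar M"
    and f_smooth: "\<And>i. smooth_real (f i)"
    and A_smooth: "\<And>i j. smooth_real (A i j)"
    and A_sym: "\<And>i j v. A i j v = A j i v"
    and A_nonneg: "\<And>v (x :: real^'n). 0 \<le> (\<Sum>i\<in>UNIV. \<Sum>j\<in>UNIV. x $ i * deriv (A i j) v * x $ j)"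
    and \<sigma>_smooth: "\<And>i k. smooth_real (\<sigma> i k)"
    and a_factor: "\<And>i j v. deriv (A i j) v = (\<Sum>k\<in>UNIV. \<sigma> i k v * \<sigma> j k v)"
    and u0_meas: "u0 \<in> borel_measurable M"
    and u0_bdd: "\<exists>C. AE \<omega> in M. \<bar>u0 \<omega>\<bar> \<le> C"
    and entropy: "entropy_solution M f A \<sigma> u0 u"
    and u_meas: "\<And>t. 0 \<le> t \<Longrightarrow> integrable M (u t)"
    and u_cont: "\<And>s. 0 \<le> s \<Longrightarrow> ((\<lambda>t. \<integral>\<omega>. \<bar>u t \<omega> - u s \<omega>\<bar> \<partial>M) \<longlongrightarrow> 0) (at s within {0..})"
    and u_init: "AE \<omega> in M. u 0 \<omega> = u0 \<omega>"
  shows "\<And>t1 t2. 0 \<le> t1 \<Longrightarrow> t1 \<le> t2 \<Longrightarrow>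
           (\<integral>\<omega>. \<bar>u t2 \<omega>\<bar>\<^sup>2 \<partial>M) \<le> (\<integral>\<omega>. \<bar>u t1 \<omega>\<bar>\<^sup>2 \<partial>M)"
proof -
  fix t1 t2 :: real
  assume "0 \<le> t1" "t1 \<le> t2"
  have M: "finite_measure M"
    using haar by (simp add: bohr_haar_def prob_space_def)
  obtain C where bound: "AE p in ST M. \<bar>u (fst p) (snd p)\<bar> \<le> C"
    using entropy unfolding entropy_solution_def by blast
  have "AE \<omega> in M. \<bar>u s \<omega>\<bar> \<le> C" if "0 \<le> s" for s
    using M bound[unfolded ST_def] u_meas u_cont[OF that] that by (rule AE_bound_at_time_of_AE_bound)
  then have energy_cont: "continuous_on {0..} (\<lambda>t. \<integral>\<omega>. (u t \<omega>)\<^sup>2 \<partial>M)"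
    using M u_meas u_cont by (intro continuous_on_integral_square)
  have "(\<integral>\<omega>. (u b \<omega>)\<^sup>2 \<partial>M) \<le> (\<integral>\<omega>. (u a \<omega>)\<^sup>2 \<partial>M)" if "0 < a" "a < b" for a b
  proof (rule le_if_weak_derivative_nonpos[where E = "\<lambda>t. \<integral>\<omega>. (u t \<omega>)\<^sup>2 \<partial>M"])
    show cont_ab: "continuous_on {a..b} (\<lambda>t. \<integral>\<omega>. (u t \<omega>)\<^sup>2 \<partial>M)"
      using that by (intro continuous_on_subset[OF energy_cont]) auto
    show "0 \<le> integral {a..b} (\<lambda>t. (\<integral>\<omega>. (u t \<omega>)\<^sup>2 \<partial>M) * deriv \<theta> t)"
      if "smooth_real \<theta>" "\<And>t. 0 \<le> \<theta> t" "\<And>t. \<theta> t \<noteq> 0 \<Longrightarrow> a \<le> t \<and> t \<le> b" for \<theta>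
      using entropy_solution_energy_weakly_decreasing[OF M entropy f_smooth A_smooth bound cont_ab]
        that \<open>0 < a\<close> by blast
  qed (use that in auto)
  then show "(\<integral>\<omega>. \<bar>u t2 \<omega>\<bar>\<^sup>2 \<partial>M) \<le> (\<integral>\<omega>. \<bar>u t1 \<omega>\<bar>\<^sup>2 \<partial>M)"
    using continuous_le_if_decreasing_on_positive[OF energy_cont _ \<open>0 \<le> t1\<close> \<open>t1 \<le> t2\<close>] by simp
qed

end
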